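(* Let $\mathcal{R}$ be a ring and $(\mathcal{C}^{\bullet},\partial)$ a cochain complex of $\mathcal{R}$-modules with a compatible bigrading $\mathcal{C}^{k}=\bigoplus_{p+q=k}\mathcal{C}^{p,q}$, $\mathcal{C}^{p,q}=\{0\}$ whenever $p<0$ or $q<0$, and $\partial=\partial_{2,-1}+\partial_{1,0}+\partial_{0,1}$ with $\partial_{i,j}(\mathcal{C}^{p,q})\subseteq\mathcal{C}^{p+i,q+j}$. Let $\mathcal{N}:=\ker(\partial_{0,1})\cap\ker(\partial_{2,-1})\subseteq\mathcal{C}$, $\mathcal{N}^{p,q}:=\mathcal{N}\cap\mathcal{C}^{p,q}$ and, for $q\in\mathbb{Z}$, $\mathcal{N}_{q}:=\bigoplus_{p\in\mathbb{Z}}\mathcal{N}^{p-q,q}$ (graded so that $\mathcal{N}^{p-q,q}$ sits in degree $p$). Then the graded $\mathcal{R}$-module $\mathcal{N}$ is a cochain subcomplex of $(\mathcal{C},\partial)$, and for each $q\in\mathbb{Z}$, $\mathcal{N}_{q}$ is also a cochain subcomplex of $(\mathcal{C},\partial)$. *)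

theory Defs
  imports Main
begin

text \<open>Left modules over a (not necessarily commutative) ring 'r, with the module
  living inside an ambient abelian group 'm; scalar multiplication is smul.\<close>

definition lmodule :: "('r::ring_1 \<Rightarrow> 'm::ab_group_add \<Rightarrow> 'm) \<Rightarrow> bool" where
  "lmodule smul \<longleftrightarrow>
     (\<forall>a b x. smul (a + b) x = smul a x + smul b x) \<and>
     (\<forall>a x y. smul a (x + y) = smul a x + smul a y) \<and>
     (\<forall>a b x. smul (a * b) x = smul a (smul b x)) \<and>
     (\<forall>x. smul 1 x = x)"

definition submod :: "('r::ring_1 \<Rightarrow> 'm::ab_group_add \<Rightarrow> 'm) \<Rightarrow> 'm set \<Rightarrow> bool" where
  "submod smul S \<longleftrightarrow> 0 \<in> S \<and> (\<forall>x\<in>S. \<forall>y\<in>S. x + y \<in> S) \<and> (\<forall>a. \<forall>x\<in>S. smul a x \<in> S)"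

definition linear_on :: "('r::ring_1 \<Rightarrow> 'm::ab_group_add \<Rightarrow> 'm) \<Rightarrow> 'm set \<Rightarrow> ('m \<Rightarrow> 'm) \<Rightarrow> bool" where
  "linear_on smul S f \<longleftrightarrow>
     (\<forall>x\<in>S. \<forall>y\<in>S. f (x + y) = f x + f y) \<and> (\<forall>a. \<forall>x\<in>S. f (smul a x) = smul a (f x))"

text \<open>Elements of the bigraded module  C = (+)_{p,q} C^{p,q}  (external direct sum):
  families x p q with x p q \<in> C p q, finitely many nonzero.\<close>
definition bielem :: "(int \<Rightarrow> int \<Rightarrow> 'm::zero set) \<Rightarrow> (int \<Rightarrow> int \<Rightarrow> 'm) \<Rightarrow> bool" where
  "bielem C x \<longleftrightarrow> (\<forall>p q. x p q \<in> C p q) \<and> finite {(p, q). x p q \<noteq> 0}"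

definition Tot :: "(int \<Rightarrow> int \<Rightarrow> 'm::zero set) \<Rightarrow> int \<Rightarrow> (int \<Rightarrow> int \<Rightarrow> 'm) set" where
  "Tot C k = {x. bielem C x \<and> (\<forall>p q. p + q \<noteq> k \<longrightarrow> x p q = 0)}"

definition bzero :: "int \<Rightarrow> int \<Rightarrow> 'm::zero" where "bzero = (\<lambda>p q. 0)"
definition badd :: "(int \<Rightarrow> int \<Rightarrow> 'm::plus) \<Rightarrow> (int \<Rightarrow> int \<Rightarrow> 'm) \<Rightarrow> int \<Rightarrow> int \<Rightarrow> 'm" where
  "badd x y = (\<lambda>p q. x p q + y p q)"
definition bsmul :: "('r \<Rightarrow> 'm \<Rightarrow> 'm) \<Rightarrow> 'r \<Rightarrow> (int \<Rightarrow> int \<Rightarrow> 'm) \<Rightarrow> int \<Rightarrow> int \<Rightarrow> 'm" where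
  "bsmul smul a x = (\<lambda>p q. smul a (x p q))"

definition bsubmod :: "('r::ring_1 \<Rightarrow> 'm::ab_group_add \<Rightarrow> 'm) \<Rightarrow> (int \<Rightarrow> int \<Rightarrow> 'm) set \<Rightarrow> bool" where
  "bsubmod smul S \<longleftrightarrow> bzero \<in> S \<and> (\<forall>x\<in>S. \<forall>y\<in>S. badd x y \<in> S) \<and> (\<forall>a. \<forall>x\<in>S. bsmul smul a x \<in> S)"

text \<open>The operator  \<partial>_{i,j}  on C induced by the component maps d p q : C^{p,q} \<rightarrow> C^{p+i,q+j}.\<close>
definition Dop :: "int \<Rightarrow> int \<Rightarrow> (int \<Rightarrow> int \<Rightarrow> 'm \<Rightarrow> 'm) \<Rightarrow> (int \<Rightarrow> int \<Rightarrow> 'm) \<Rightarrow> int \<Rightarrow> int \<Rightarrow> 'm" where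
  "Dop i j d x = (\<lambda>p q. d (p - i) (q - j) (x (p - i) (q - j)))"

definition Dtot :: "(int \<Rightarrow> int \<Rightarrow> 'm::plus \<Rightarrow> 'm) \<Rightarrow> (int \<Rightarrow> int \<Rightarrow> 'm \<Rightarrow> 'm) \<Rightarrow> (int \<Rightarrow> int \<Rightarrow> 'm \<Rightarrow> 'm)
     \<Rightarrow> (int \<Rightarrow> int \<Rightarrow> 'm) \<Rightarrow> int \<Rightarrow> int \<Rightarrow> 'm" where
  "Dtot d21 d10 d01 x = (\<lambda>p q. Dop 2 (-1) d21 x p q + Dop 1 0 d10 x p q + Dop 0 1 d01 x p q)"

definition cochain_subcomplex ::
  "('r::ring_1 \<Rightarrow> 'm::ab_group_add \<Rightarrow> 'm) \<Rightarrow> (int \<Rightarrow> int \<Rightarrow> 'm set)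
   \<Rightarrow> ((int \<Rightarrow> int \<Rightarrow> 'm) \<Rightarrow> int \<Rightarrow> int \<Rightarrow> 'm) \<Rightarrow> (int \<Rightarrow> (int \<Rightarrow> int \<Rightarrow> 'm) set) \<Rightarrow> bool" where
  "cochain_subcomplex smul C D S \<longleftrightarrow>
     (\<forall>k. S k \<subseteq> Tot C k \<and> bsubmod smul (S k) \<and> D ` S k \<subseteq> S (k + 1))"

definition Ncx :: "(int \<Rightarrow> int \<Rightarrow> 'm::zero set) \<Rightarrow> (int \<Rightarrow> int \<Rightarrow> 'm \<Rightarrow> 'm) \<Rightarrow> (int \<Rightarrow> int \<Rightarrow> 'm \<Rightarrow> 'm)
     \<Rightarrow> int \<Rightarrow> (int \<Rightarrow> int \<Rightarrow> 'm) set" where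
  "Ncx C d21 d01 k = {x \<in> Tot C k. Dop 0 1 d01 x = bzero \<and> Dop 2 (-1) d21 x = bzero}"

definition Nq :: "(int \<Rightarrow> int \<Rightarrow> 'm::zero set) \<Rightarrow> (int \<Rightarrow> int \<Rightarrow> 'm \<Rightarrow> 'm) \<Rightarrow> (int \<Rightarrow> int \<Rightarrow> 'm \<Rightarrow> 'm)
     \<Rightarrow> int \<Rightarrow> int \<Rightarrow> (int \<Rightarrow> int \<Rightarrow> 'm) set" where
  "Nq C d21 d01 q p = {x \<in> Ncx C d21 d01 p. \<forall>a b. (a, b) \<noteq> (p - q, q) \<longrightarrow> x a b = 0}"

end

theory Submission
  imports Defs
begin

text \<open>On \<open>N\<close> the differential reduces to \<open>\<partial>\<^sub>1\<^sub>,\<^sub>0\<close>. Evaluating \<open>\<partial>\<^sup>2 = 0\<close> on an element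
  concentrated in a single bidegree and reading off the components of bidegree shift \<open>(1,1)\<close>
  and \<open>(3,-1)\<close> shows that \<open>\<partial>\<^sub>1\<^sub>,\<^sub>0\<close> anticommutes with \<open>\<partial>\<^sub>0\<^sub>,\<^sub>1\<close> and with \<open>\<partial>\<^sub>2\<^sub>,\<^sub>-\<^sub>1\<close>; hence
  \<open>\<partial>\<^sub>1\<^sub>,\<^sub>0\<close> preserves their common kernel. Since \<open>\<partial>\<^sub>1\<^sub>,\<^sub>0\<close> leaves \<open>q\<close> unchanged, it also
  preserves each \<open>N\<^sub>q\<close>.\<close>

lemma linear_on_zero:
  assumes "linear_on smul S f" and "(0::'m::ab_group_add) \<in> S"
  shows "f 0 = 0"
proof -
  have "f (0 + 0) = f 0 + f 0" using assms unfolding linear_on_def by blast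
  then show ?thesis by simp
qed

lemma lmodule_smul_zero:
  assumes "lmodule (smul :: 'r::ring_1 \<Rightarrow> 'm::ab_group_add \<Rightarrow> 'm)"
  shows "smul a 0 = 0"
proof -
  have "smul a (0 + 0) = smul a 0 + smul a 0" using assms unfolding lmodule_def by blast
  then show ?thesis by simp
qed

lemma Tot_component: "x \<in> Tot C k \<Longrightarrow> x p q \<in> C p q"
  unfolding Tot_def bielem_def by blast

lemma Tot_bsubmod:
  assumes mod: "lmodule smul" and sub: "\<And>p q. submod smul (C p q)"
  shows "bsubmod smul (Tot C k)"
proof -
  have zero: "bzero \<in> Tot C k"
    using sub unfolding Tot_def bielem_def bzero_def submod_def by simp
  have add: "badd x y \<in> Tot C k" if "x \<in> Tot C k" "y \<in> Tot C k" for x y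
  proof -
    have "{(p, q). badd x y p q \<noteq> 0} \<subseteq> {(p, q). x p q \<noteq> 0} \<union> {(p, q). y p q \<noteq> 0}"
      by (auto simp: badd_def)
    moreover have "finite ({(p, q). x p q \<noteq> 0} \<union> {(p, q). y p q \<noteq> 0})"
      using that unfolding Tot_def bielem_def by blast
    ultimately have "finite {(p, q). badd x y p q \<noteq> 0}" by (rule finite_subset)
    then show ?thesis using that sub unfolding Tot_def bielem_def badd_def submod_def by auto
  qed
  have smult: "bsmul smul a x \<in> Tot C k" if "x \<in> Tot C k" for x a
  proof -
    have "{(p, q). bsmul smul a x p q \<noteq> 0} \<subseteq> {(p, q). x p q \<noteq> 0}"
      by (auto simp: bsmul_def lmodule_smul_zero[OF mod])
    moreover have "finite {(p, q). x p q \<noteq> 0}" using that unfolding Tot_def bielem_def by blast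
    ultimately have "finite {(p, q). bsmul smul a x p q \<noteq> 0}" by (rule finite_subset)
    then show ?thesis
      using that sub unfolding Tot_def bielem_def bsmul_def submod_def
      by (auto simp: lmodule_smul_zero[OF mod])
  qed
  show ?thesis unfolding bsubmod_def using zero add smult by blast
qed

lemma Dop_mem_Tot:
  assumes maps: "\<And>p q. d p q ` C p q \<subseteq> C (p + i) (q + j)"
    and zero: "\<And>p q. d p q 0 = 0"
    and x: "x \<in> Tot C k"
  shows "Dop i j d x \<in> Tot C (k + i + j)"
proof -
  let ?S = "{(p, q). x p q \<noteq> 0}"
  have "{(p, q). Dop i j d x p q \<noteq> 0} \<subseteq> (\<lambda>(p, q). (p + i, q + j)) ` ?S"
  proof
    fix z assume "z \<in> {(p, q). Dop i j d x p q \<noteq> 0}"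
    then obtain p q where z: "z = (p, q)" and nz: "Dop i j d x p q \<noteq> 0" by blast
    have "x (p - i) (q - j) \<noteq> 0"
    proof
      assume "x (p - i) (q - j) = 0"
      then show False using nz by (simp add: Dop_def zero)
    qed
    then show "z \<in> (\<lambda>(p, q). (p + i, q + j)) ` ?S"
      using z by (auto intro!: image_eqI[of _ _ "(p - i, q - j)"])
  qed
  moreover have "finite ?S" using x unfolding Tot_def bielem_def by blast
  ultimately have "finite {(p, q). Dop i j d x p q \<noteq> 0}" by (meson finite_imageI finite_subset)
  moreover have "Dop i j d x p q \<in> C p q" for p q
    using maps[of "p - i" "q - j"] Tot_component[OF x, of "p - i" "q - j"]
    by (force simp: Dop_def)
  moreover have "Dop i j d x p q = 0" if "p + q \<noteq> k + i + j" for p q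
    using x that unfolding Tot_def by (simp add: Dop_def zero)
  ultimately show ?thesis unfolding Tot_def bielem_def by blast
qed

definition bisingle :: "int \<Rightarrow> int \<Rightarrow> 'm::zero \<Rightarrow> int \<Rightarrow> int \<Rightarrow> 'm" where
  "bisingle a b v = (\<lambda>p q. if p = a \<and> q = b then v else 0)"

lemma bisingle_mem_Tot:
  assumes "\<And>p q. (0::'m::zero) \<in> C p q" and "v \<in> C a b"
  shows "bisingle a b v \<in> Tot C (a + b)"
proof -
  have "{(p, q). bisingle a b v p q \<noteq> 0} \<subseteq> {(a, b)}" by (auto simp: bisingle_def)
  then have "finite {(p, q). bisingle a b v p q \<noteq> 0}" by (rule finite_subset) simp
  then show ?thesis using assms unfolding Tot_def bielem_def bisingle_def by auto
qed

lemma Dtot_square_zero_anticommute: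
  fixes d21 d10 d01 :: "int \<Rightarrow> int \<Rightarrow> 'm::ab_group_add \<Rightarrow> 'm"
  assumes z21: "\<And>p q. d21 p q 0 = 0" and z10: "\<And>p q. d10 p q 0 = 0" and z01: "\<And>p q. d01 p q 0 = 0"
    and dd: "Dtot d21 d10 d01 (Dtot d21 d10 d01 (bisingle a b v)) = bzero"
  shows "d01 (a + 1) b (d10 a b v) = - d10 a (b + 1) (d01 a b v)"
    and "d21 (a + 1) b (d10 a b v) = - d10 (a + 2) (b - 1) (d21 a b v)"
proof -
  have "Dtot d21 d10 d01 (Dtot d21 d10 d01 (bisingle a b v)) (a + 1) (b + 1) = 0"
    "Dtot d21 d10 d01 (Dtot d21 d10 d01 (bisingle a b v)) (a + 3) (b - 1) = 0"
    using dd by (simp_all add: bzero_def)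
  then show "d01 (a + 1) b (d10 a b v) = - d10 a (b + 1) (d01 a b v)"
    and "d21 (a + 1) b (d10 a b v) = - d10 (a + 2) (b - 1) (d21 a b v)"
    by (simp_all add: Dtot_def Dop_def bisingle_def z21 z10 z01 add.commute eq_neg_iff_add_eq_0)
qed

lemma Dop_badd:
  assumes "\<And>p q. linear_on smul (C p q) (d p q)" "bielem C x" "bielem C y"
  shows "Dop i j d (badd x y) = badd (Dop i j d x) (Dop i j d y)"
  using assms unfolding Dop_def badd_def linear_on_def bielem_def by (auto intro!: ext)

lemma Dop_bsmul:
  assumes "\<And>p q. linear_on smul (C p q) (d p q)" "bielem C x"
  shows "Dop i j d (bsmul smul a x) = bsmul smul a (Dop i j d x)"
  using assms unfolding Dop_def bsmul_def linear_on_def bielem_def by (auto intro!: ext)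

lemma Ncx_bsubmod:
  assumes mod: "lmodule smul" and sub: "\<And>p q. submod smul (C p q)"
    and lin21: "\<And>p q. linear_on smul (C p q) (d21 p q)"
    and lin01: "\<And>p q. linear_on smul (C p q) (d01 p q)"
  shows "bsubmod smul (Ncx C d21 d01 k)"
proof -
  have C0: "0 \<in> C p q" for p q using sub unfolding submod_def by blast
  have TotB: "x \<in> Tot C k \<Longrightarrow> bielem C x" for x unfolding Tot_def by blast
  note Tot = Tot_bsubmod[OF mod sub, where k=k, unfolded bsubmod_def]
  have "bzero \<in> Ncx C d21 d01 k"
    using Tot linear_on_zero[OF lin21 C0] linear_on_zero[OF lin01 C0]
    by (simp add: Ncx_def Dop_def bzero_def)
  moreover have "badd x y \<in> Ncx C d21 d01 k" if "x \<in> Ncx C d21 d01 k" "y \<in> Ncx C d21 d01 k" for x y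
    using that Tot Dop_badd[OF lin01, where x=x and y=y] Dop_badd[OF lin21, where x=x and y=y] TotB
    unfolding Ncx_def by (auto simp: badd_def bzero_def)
  moreover have "bsmul smul a x \<in> Ncx C d21 d01 k" if "x \<in> Ncx C d21 d01 k" for x a
    using that Tot Dop_bsmul[OF lin01, where x=x] Dop_bsmul[OF lin21, where x=x] TotB
    unfolding Ncx_def by (auto simp: bsmul_def bzero_def lmodule_smul_zero[OF mod])
  ultimately show ?thesis unfolding bsubmod_def by blast
qed

lemma Nq_bsubmod:
  assumes "lmodule smul" and "bsubmod smul (Ncx C d21 d01 k)"
  shows "bsubmod smul (Nq C d21 d01 q k)"
  using assms(2) unfolding bsubmod_def Nq_def
  by (auto simp: bzero_def badd_def bsmul_def lmodule_smul_zero[OF assms(1)])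

lemma Dtot_Ncx_eq_Dop10:
  fixes d21 d10 d01 :: "int \<Rightarrow> int \<Rightarrow> 'm::monoid_add \<Rightarrow> 'm"
  assumes "x \<in> Ncx C d21 d01 k"
  shows "Dtot d21 d10 d01 x = Dop 1 0 d10 x"
proof -
  have "Dop 0 1 d01 x = bzero" "Dop 2 (-1) d21 x = bzero" using assms unfolding Ncx_def by auto
  then show ?thesis by (simp add: Dtot_def bzero_def fun_eq_iff)
qed

lemma Dtot_mem_Ncx:
  fixes d21 d10 d01 :: "int \<Rightarrow> int \<Rightarrow> 'm::ab_group_add \<Rightarrow> 'm"
  assumes anti01: "\<And>a b v. v \<in> C a b \<Longrightarrow> d01 (a + 1) b (d10 a b v) = - d10 a (b + 1) (d01 a b v)"
    and anti21: "\<And>a b v. v \<in> C a b \<Longrightarrow> d21 (a + 1) b (d10 a b v) = - d10 (a + 2) (b - 1) (d21 a b v)"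
    and map10: "\<And>p q. d10 p q ` C p q \<subseteq> C (p + 1) q"
    and z10: "\<And>p q. d10 p q 0 = 0"
    and x: "x \<in> Ncx C d21 d01 k"
  shows "Dtot d21 d10 d01 x \<in> Ncx C d21 d01 (k + 1)"
proof -
  have xT: "x \<in> Tot C k" using x unfolding Ncx_def by blast
  have ker01: "d01 a b (x a b) = 0" for a b
  proof -
    have "Dop 0 1 d01 x a (b + 1) = 0" using x unfolding Ncx_def bzero_def by auto
    then show ?thesis by (simp add: Dop_def)
  qed
  have ker21: "d21 a b (x a b) = 0" for a b
  proof -
    have "Dop 2 (-1) d21 x (a + 2) (b - 1) = 0" using x unfolding Ncx_def bzero_def by auto
    then show ?thesis by (simp add: Dop_def)
  qed
  have "\<And>p q. d10 p q ` C p q \<subseteq> C (p + 1) (q + 0)" using map10 by simp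
  from Dop_mem_Tot[OF this z10 xT] have "Dop 1 0 d10 x \<in> Tot C (k + 1)" by simp
  moreover have "Dop 0 1 d01 (Dop 1 0 d10 x) p q = 0" for p q
    using anti01[OF Tot_component[OF xT], of "p - 1" "q - 1"] by (simp add: Dop_def ker01 z10)
  moreover have "Dop 2 (-1) d21 (Dop 1 0 d10 x) p q = 0" for p q
    using anti21[OF Tot_component[OF xT], of "p - 3" "q + 1"]
    by (simp add: Dop_def ker21 z10 algebra_simps)
  ultimately show ?thesis
    unfolding Dtot_Ncx_eq_Dop10[OF x] Ncx_def bzero_def by (simp add: fun_eq_iff)
qed

lemma Dtot_mem_Nq:
  fixes d21 d10 d01 :: "int \<Rightarrow> int \<Rightarrow> 'm::monoid_add \<Rightarrow> 'm"
  assumes z10: "\<And>p q. d10 p q 0 = 0"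
    and DN: "Dtot d21 d10 d01 x \<in> Ncx C d21 d01 (k + 1)"
    and x: "x \<in> Nq C d21 d01 q k"
  shows "Dtot d21 d10 d01 x \<in> Nq C d21 d01 q (k + 1)"
proof -
  have xN: "x \<in> Ncx C d21 d01 k" using x unfolding Nq_def by blast
  have "Dop 1 0 d10 x a b = 0" if "(a, b) \<noteq> (k + 1 - q, q)" for a b
  proof -
    have "(a - 1, b) \<noteq> (k - q, q)" using that by auto
    then have "x (a - 1) b = 0" using x unfolding Nq_def by blast
    then show ?thesis by (simp add: Dop_def z10)
  qed
  then show ?thesis using DN unfolding Nq_def Dtot_Ncx_eq_Dop10[OF xN] by blast
qed

theorem lemma3p1:
  fixes smul :: "'r::ring_1 \<Rightarrow> 'm::ab_group_add \<Rightarrow> 'm"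
    and C :: "int \<Rightarrow> int \<Rightarrow> 'm set"
    and d21 d10 d01 :: "int \<Rightarrow> int \<Rightarrow> 'm \<Rightarrow> 'm"
  assumes mod: "lmodule smul"
    and sub: "\<And>p q. submod smul (C p q)"
    and vanish: "\<And>p q. p < 0 \<or> q < 0 \<Longrightarrow> C p q = {0}"
    and lin21: "\<And>p q. linear_on smul (C p q) (d21 p q)"
    and lin10: "\<And>p q. linear_on smul (C p q) (d10 p q)"
    and lin01: "\<And>p q. linear_on smul (C p q) (d01 p q)"
    and map21: "\<And>p q. d21 p q ` C p q \<subseteq> C (p + 2) (q - 1)"
    and map10: "\<And>p q. d10 p q ` C p q \<subseteq> C (p + 1) q"
    and map01: "\<And>p q. d01 p q ` C p q \<subseteq> C p (q + 1)"
    and dd: "\<And>k x. x \<in> Tot C k \<Longrightarrow> Dtot d21 d10 d01 (Dtot d21 d10 d01 x) = bzero"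
  shows "cochain_subcomplex smul C (Dtot d21 d10 d01) (Ncx C d21 d01)
       \<and> (\<forall>q. cochain_subcomplex smul C (Dtot d21 d10 d01) (Nq C d21 d01 q))"
proof -
  have C0: "0 \<in> C p q" for p q using sub unfolding submod_def by blast
  note zero = linear_on_zero[OF lin21 C0] linear_on_zero[OF lin10 C0] linear_on_zero[OF lin01 C0]
  note anti = Dtot_square_zero_anticommute[OF zero dd[OF bisingle_mem_Tot[OF C0]]]
  note DN = Dtot_mem_Ncx[OF anti map10 zero(2)]
  note DNq = Dtot_mem_Nq[OF zero(2) DN]
  note N_submod = Ncx_bsubmod[OF mod sub lin21 lin01]
  have "cochain_subcomplex smul C (Dtot d21 d10 d01) (Ncx C d21 d01)"
    unfolding cochain_subcomplex_def using N_submod DN by (auto simp: Ncx_def)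
  moreover have "cochain_subcomplex smul C (Dtot d21 d10 d01) (Nq C d21 d01 q)" for q
    unfolding cochain_subcomplex_def using Nq_bsubmod[OF mod N_submod] DNq
    by (auto simp: Nq_def Ncx_def)
  ultimately show ?thesis by blast
qed

end
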